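(* Let $I\subset\mathbb{R}$ be an open interval and $W\subset I$ a countable subset which is dense in $I$; let $\check I$ be the fractured interval of $I$ at $W$. Then the sets $[a^R,b^L]\cap\check I$ for $a<b$ in $W$ form a basis for the topology of $\check I$, and each of these sets is homeomorphic to the Cantor set.
   Context: The divided interval of $I$ at $W$ is the set $\hat I = \{w^{L}, \hat w, w^{R} : w\in W\}\sqcup (I\smallsetminus W)$, with $\pi\colon\hat I\to I$ sending $w^L,\hat w,w^R$ to $w$ and fixing $I\smallsetminus W$, totally ordered so that $\pi$ is order preserving and $w^L<\hat w<w^R$. For $a,b\in\hat I\cup\{\pm\infty\}$, $(a,b)=\{s: a<s<b\}$; basis intervals are the nonempty $(a,b)$ other than those with $a=w^L$ or $b=w^R$ ($w\in W$), and they generate the topology of $\hat I$. The fractured interval is $\check I = \hat I\smallsetminus\{\hat w: w\in W\}$ with the subspace topology; $[a^R,b^L]=\{s: a^R\le s\le b^L\}$. *)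

theory Defs
  imports "HOL-Analysis.Analysis"
begin

(* Points of the divided interval: (x, t) with x \<in> I, t \<in> {-1,0,1};
   for w \<in> W: w^L = (w,-1), \<hat>w = (w,0), w^R = (w,1); for x \<notin> W only (x,0). *)
type_synonym dpt = "real \<times> int"

definition divided_interval :: "real set \<Rightarrow> real set \<Rightarrow> dpt set" where
  "divided_interval I W =
     {(x, t). x \<in> I \<and> (if x \<in> W then t \<in> {-1, 0, 1} else t = 0)}"

definition wL :: "real \<Rightarrow> dpt" where "wL w = (w, -1)"
definition what :: "real \<Rightarrow> dpt" where "what w = (w, 0)"
definition wR :: "real \<Rightarrow> dpt" where "wR w = (w, 1)"

definition dlt :: "dpt \<Rightarrow> dpt \<Rightarrow> bool" where
  "dlt p q \<longleftrightarrow> fst p < fst q \<or> (fst p = fst q \<and> snd p < snd q)"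

definition dle :: "dpt \<Rightarrow> dpt \<Rightarrow> bool" where
  "dle p q \<longleftrightarrow> p = q \<or> dlt p q"

datatype endpt = NegInf | Fin dpt | PosInf

fun elt :: "endpt \<Rightarrow> dpt \<Rightarrow> bool" where
  "elt NegInf _ = True"
| "elt (Fin a) s = dlt a s"
| "elt PosInf _ = False"

fun glt :: "dpt \<Rightarrow> endpt \<Rightarrow> bool" where
  "glt _ NegInf = False"
| "glt s (Fin b) = dlt s b"
| "glt _ PosInf = True"

definition open_iv :: "real set \<Rightarrow> real set \<Rightarrow> endpt \<Rightarrow> endpt \<Rightarrow> dpt set" where
  "open_iv I W a b = {s \<in> divided_interval I W. elt a s \<and> glt s b}"

definition endpoints :: "real set \<Rightarrow> real set \<Rightarrow> endpt set" where
  "endpoints I W = {NegInf, PosInf} \<union> Fin ` divided_interval I W"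

definition basis_intervals :: "real set \<Rightarrow> real set \<Rightarrow> dpt set set" where
  "basis_intervals I W =
     {open_iv I W a b | a b. a \<in> endpoints I W \<and> b \<in> endpoints I W \<and>
        open_iv I W a b \<noteq> {} \<and>
        (\<forall>w\<in>W. a \<noteq> Fin (wL w)) \<and> (\<forall>w\<in>W. b \<noteq> Fin (wR w))}"

definition divided_topology :: "real set \<Rightarrow> real set \<Rightarrow> dpt topology" where
  "divided_topology I W = topology_generated_by (basis_intervals I W)"

definition fractured_interval :: "real set \<Rightarrow> real set \<Rightarrow> dpt set" where
  "fractured_interval I W = divided_interval I W - what ` W"

definition fractured_topology :: "real set \<Rightarrow> real set \<Rightarrow> dpt topology" where
  "fractured_topology I W = subtopology (divided_topology I W) (fractured_interval I W)"

definition closed_iv :: "dpt \<Rightarrow> dpt \<Rightarrow> dpt set" where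
  "closed_iv p q = {s. dle p s \<and> dle s q}"

primrec cantor_approx :: "nat \<Rightarrow> real set" where
  "cantor_approx 0 = {0..1}"
| "cantor_approx (Suc n) = (\<lambda>x. x / 3) ` cantor_approx n \<union> (\<lambda>x. 2/3 + x / 3) ` cantor_approx n"

definition cantor_set :: "real set" where
  "cantor_set = (\<Inter>n. cantor_approx n)"

end

theory Submission
  imports Defs
begin

text \<open>
  Enumerate the dense set \<open>W\<close>. A block \<open>[a\<^sup>R, b\<^sup>L] \<inter> \<check>I\<close> splits into
  \<open>[a\<^sup>R, m\<^sup>L]\<close> and \<open>[m\<^sup>R, b\<^sup>L]\<close> at the point \<open>m \<in> W \<inter> (a, b)\<close> of least index;
  iterating gives every point of the block a binary address. Along any address each
  \<open>w \<in> W\<close> eventually leaves the open intervals spanned by the cells, since the split points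
  are distinct and, while \<open>w\<close> stays inside, have index at most that of \<open>w\<close>. So the cells of
  a point form a neighbourhood basis, the address map is injective, and every sequence is
  the address of the point at the supremum of its left cell ends. Reading addresses as
  ternary expansions with digits 0 and 2 gives a continuous open bijection onto the Cantor
  set. The basis property holds because, by density of \<open>W\<close>, every basis interval around a
  point of \<open>\<check>I\<close> contains a block around that point.
\<close>

definition ternary :: "(nat \<Rightarrow> bool) \<Rightarrow> real" where
  "ternary d = (\<Sum>n. (if d n then 2 else 0) / 3 ^ Suc n)"

lemma summable_ternary: "summable (\<lambda>n. (if d n then 2 else 0) / (3::real) ^ Suc n)"
proof (rule summable_comparison_test)
  show "\<exists>N. \<forall>n\<ge>N. norm ((if d n then 2 else 0) / (3::real) ^ Suc n) \<le> 2 * (1/3) ^ Suc n"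
    by (auto simp: power_divide)
  show "summable (\<lambda>n. 2 * (1/3::real) ^ Suc n)"
    by (intro summable_mult summable_Suc_iff[THEN iffD2] summable_geometric) auto
qed

lemma ternary_rec: "ternary d = (if d 0 then 2/3 else 0) + ternary (\<lambda>n. d (Suc n)) / 3"
proof -
  have "ternary (\<lambda>n. d (Suc n)) / 3 = (\<Sum>n. (if d (Suc n) then 2 else 0) / 3 ^ Suc n / 3)"
    unfolding ternary_def by (rule suminf_divide[symmetric, OF summable_ternary])
  also have "\<dots> = (\<Sum>n. (if d (Suc n) then 2 else 0) / 3 ^ Suc (Suc n))"
    by (simp add: field_simps)
  also have "\<dots> = ternary d - (if d 0 then 2/3 else 0)"
    unfolding ternary_def using suminf_split_head[OF summable_ternary[of d]] by simp
  finally show ?thesis by linarith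
qed

lemma ternary_nonneg: "0 \<le> ternary d"
  unfolding ternary_def by (rule suminf_nonneg[OF summable_ternary]) auto

lemma ternary_le_1: "ternary d \<le> 1"
proof -
  have "ternary d \<le> ternary (\<lambda>_. True)"
    unfolding ternary_def by (rule suminf_le[OF _ summable_ternary summable_ternary]) auto
  also have "\<dots> = 1"
    using ternary_rec[of "\<lambda>_. True"] by simp
  finally show ?thesis .
qed

lemma ternary_dist_le_if_eq_upto:
  "(\<forall>k<n. d k = e k) \<Longrightarrow> \<bar>ternary d - ternary e\<bar> \<le> 1 / 3 ^ n"
proof (induction n arbitrary: d e)
  case 0
  then show ?case
    using ternary_nonneg[of d] ternary_le_1[of d] ternary_nonneg[of e] ternary_le_1[of e] by simp
next
  case (Suc n)
  have "\<bar>ternary (\<lambda>n. d (Suc n)) - ternary (\<lambda>n. e (Suc n))\<bar> \<le> 1 / 3 ^ n"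
    using Suc by (intro Suc.IH) auto
  then show ?case
    using Suc.prems ternary_rec[of d] ternary_rec[of e] by (auto simp: abs_if split: if_splits)
qed

lemma eq_upto_if_ternary_dist_less:
  "\<bar>ternary d - ternary e\<bar> < 1 / 3 ^ n \<Longrightarrow> \<forall>k<n. d k = e k"
proof (induction n arbitrary: d e)
  case 0
  then show ?case by simp
next
  case (Suc n)
  have "d 0 = e 0"
  proof (rule ccontr)
    assume "d 0 \<noteq> e 0"
    \<comment> \<open>then the two values lie in the disjoint thirds [0, 1/3] and [2/3, 1]\<close>
    then have "1/3 \<le> \<bar>ternary d - ternary e\<bar>"
      using ternary_rec[of d] ternary_rec[of e] ternary_nonneg[of "\<lambda>n. d (Suc n)"]
        ternary_le_1[of "\<lambda>n. d (Suc n)"] ternary_nonneg[of "\<lambda>n. e (Suc n)"]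
        ternary_le_1[of "\<lambda>n. e (Suc n)"]
      by (auto simp: abs_if)
    moreover have "(1::real) / 3 ^ Suc n \<le> 1/3" by (simp add: field_simps)
    ultimately show False using Suc.prems by simp
  qed
  moreover have "\<bar>ternary (\<lambda>n. d (Suc n)) - ternary (\<lambda>n. e (Suc n))\<bar> < 1 / 3 ^ n"
    using Suc.prems ternary_rec[of d] ternary_rec[of e] \<open>d 0 = e 0\<close> by (auto simp: abs_if split: if_splits)
  ultimately show ?case
    using Suc.IH by (auto simp: less_Suc_eq_0_disj)
qed

lemma inj_ternary: "inj ternary"
proof (rule injI, rule ext)
  fix d e k assume "ternary d = ternary e"
  then show "d k = e k" using eq_upto_if_ternary_dist_less[of d e "Suc k"] by simp
qed

lemma ternary_in_cantor_set: "ternary d \<in> cantor_set"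
proof -
  have "ternary d \<in> cantor_approx m" for m
  proof (induction m arbitrary: d)
    case 0
    then show ?case using ternary_nonneg ternary_le_1 by auto
  next
    case (Suc m)
    then show ?case
      using ternary_rec[of d] by (cases "d 0") (auto intro!: image_eqI)
  qed
  then show ?thesis unfolding cantor_set_def by auto
qed

lemma cantor_approx_subset: "cantor_approx n \<subseteq> {0..1}"
  by (induction n) auto

definition cantor_shift :: "real \<Rightarrow> real" where
  "cantor_shift x = (if x \<le> 1/3 then 3 * x else 3 * x - 2)"

lemma cantor_shift_approx: "x \<in> cantor_approx (Suc n) \<Longrightarrow> cantor_shift x \<in> cantor_approx n"
  using cantor_approx_subset[of n] by (auto simp: cantor_shift_def)

lemma cantor_shift_cantor_set: "x \<in> cantor_set \<Longrightarrow> cantor_shift x \<in> cantor_set"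
  unfolding cantor_set_def using cantor_shift_approx by blast

definition cantor_digits :: "real \<Rightarrow> nat \<Rightarrow> bool" where
  "cantor_digits x n \<longleftrightarrow> 1/3 < (cantor_shift ^^ n) x"

lemma dist_ternary_cantor_digits:
  "x \<in> cantor_set \<Longrightarrow> \<bar>x - ternary (cantor_digits x)\<bar> \<le> 1 / 3 ^ n"
proof (induction n arbitrary: x)
  case 0
  have "x \<in> cantor_approx 0" using 0 unfolding cantor_set_def by blast
  then show ?case
    using ternary_nonneg[of "cantor_digits x"] ternary_le_1[of "cantor_digits x"] by auto
next
  case (Suc n)
  have "(\<lambda>k. cantor_digits x (Suc k)) = cantor_digits (cantor_shift x)"
    unfolding cantor_digits_def by (simp add: funpow_Suc_right del: funpow.simps)
  then have "x - ternary (cantor_digits x)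
      = (cantor_shift x - ternary (cantor_digits (cantor_shift x))) / 3"
    using ternary_rec[of "cantor_digits x"]
    by (simp add: cantor_digits_def cantor_shift_def field_simps)
  then show ?case using Suc.IH[OF cantor_shift_cantor_set[OF Suc.prems]] by simp
qed

lemma range_ternary: "range ternary = cantor_set"
proof (intro antisym subsetI)
  fix x assume x: "x \<in> cantor_set"
  have "x = ternary (cantor_digits x)"
  proof (rule ccontr)
    assume "x \<noteq> ternary (cantor_digits x)"
    then obtain n where "(1/3::real) ^ n < \<bar>x - ternary (cantor_digits x)\<bar>"
      using real_arch_pow_inv[of "\<bar>x - ternary (cantor_digits x)\<bar>" "1/3"] by auto
    then show False using dist_ternary_cantor_digits[OF x, of n] by (simp add: power_divide)
  qed
  then show "x \<in> range ternary" by blast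
qed (auto intro: ternary_in_cantor_set)

lemma dle_iff: "dle p q \<longleftrightarrow> fst p < fst q \<or> (fst p = fst q \<and> snd p \<le> snd q)"
  unfolding dle_def dlt_def by (cases p; cases q) auto

lemma dle_trans: "dle p q \<Longrightarrow> dle q r \<Longrightarrow> dle p r"
  unfolding dle_iff by auto

lemma dle_wR_wL_iff [simp]: "dle (wR p) (wL q) \<longleftrightarrow> p < q"
  unfolding dle_iff wR_def wL_def by auto

lemma dle_wR_wR_iff [simp]: "dle (wR p) (wR q) \<longleftrightarrow> p \<le> q"
  unfolding dle_iff wR_def by auto

lemma dle_wL_wL_iff [simp]: "dle (wL p) (wL q) \<longleftrightarrow> p \<le> q"
  unfolding dle_iff wL_def by auto

lemma elt_dle_trans: "elt c p \<Longrightarrow> dle p u \<Longrightarrow> elt c u"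
  by (cases c) (auto simp: dle_iff dlt_def)

lemma dle_glt_trans: "dle u p \<Longrightarrow> glt p e \<Longrightarrow> glt u e"
  by (cases e) (auto simp: dle_iff dlt_def)

locale fracture =
  fixes I W :: "real set"
  assumes interval: "is_interval I" and open_I: "open I" and countable_W: "countable W"
    and W_subset: "W \<subseteq> I" and W_dense: "I \<subseteq> closure W"
begin

abbreviation "F \<equiv> fractured_interval I W"

lemma mem_fractured_interval:
  "(x, t) \<in> F \<longleftrightarrow> x \<in> I \<and> (if x \<in> W then t = -1 \<or> t = 1 else t = 0)"
  unfolding fractured_interval_def divided_interval_def what_def by auto

lemma W_between:
  assumes "x < y" "x \<in> I \<or> y \<in> I"
  shows "\<exists>w\<in>W. x < w \<and> w < y"
proof -
  have "x \<in> closure {x<..<y}" "y \<in> closure {x<..<y}"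
    using assms(1) by (simp_all add: closure_greaterThanLessThan)
  then have "I \<inter> closure {x<..<y} \<noteq> {}"
    using assms(2) by blast
  then have "{x<..<y} \<inter> I \<noteq> {}"
    using open_Int_closure_eq_empty[OF open_I] by blast
  moreover have "open ({x<..<y} \<inter> I)"
    using open_I by (simp add: open_Int)
  moreover have "{x<..<y} \<inter> I \<inter> closure W = {x<..<y} \<inter> I"
    using W_dense by blast
  ultimately have "{x<..<y} \<inter> I \<inter> W \<noteq> {}"
    using open_Int_closure_eq_empty[of "{x<..<y} \<inter> I" W] by simp
  then show ?thesis by auto
qed

lemma dle_wL_iff_not_wR_dle:
  assumes "t \<in> F" "m \<in> W"
  shows "dle t (wL m) \<longleftrightarrow> \<not> dle (wR m) t"
proof -
  obtain x u where "t = (x, u)" by force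
  then show ?thesis
    using assms by (cases "x = m") (auto simp: mem_fractured_interval dle_iff wL_def wR_def)
qed

lemma W_between_points:
  assumes "s \<in> F" "t \<in> F" "dlt s t"
  shows "\<exists>w\<in>W. dle s (wL w) \<and> dle (wR w) t"
proof -
  obtain x u y v where st: "s = (x, u)" "t = (y, v)" by force
  show ?thesis
  proof (cases "x < y")
    case True
    moreover have "y \<in> I" using assms(2) unfolding st mem_fractured_interval by auto
    ultimately obtain w where "w \<in> W" "x < w" "w < y" using W_between by blast
    then show ?thesis unfolding st wL_def wR_def dle_iff by auto
  next
    case False
    then have "x = y" "u < v" using assms(3) unfolding st dlt_def by auto
    then have "x \<in> W" "u = -1" "v = 1"
      using assms(1,2) unfolding st mem_fractured_interval by (auto split: if_splits)
    then show ?thesis unfolding st wL_def wR_def dle_iff using \<open>x = y\<close> by auto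
  qed
qed

definition block :: "real \<Rightarrow> real \<Rightarrow> dpt set" where
  "block p q = closed_iv (wR p) (wL q) \<inter> F"

lemma mem_block: "s \<in> block p q \<longleftrightarrow> s \<in> F \<and> dle (wR p) s \<and> dle s (wL q)"
  unfolding block_def closed_iv_def by auto

lemma mem_block_imp_less: "s \<in> block p q \<Longrightarrow> p < q"
  unfolding mem_block using dle_trans dle_wR_wL_iff by metis

lemma mem_block_wR_dle_imp_less: "s \<in> block p q \<Longrightarrow> dle (wR c) s \<Longrightarrow> c < q"
  unfolding mem_block using dle_trans dle_wR_wL_iff by metis

lemma mem_block_dle_wL_imp_less: "s \<in> block p q \<Longrightarrow> dle s (wL c) \<Longrightarrow> p < c"
  unfolding mem_block using dle_trans dle_wR_wL_iff by metis

lemma block_subset_block: "p \<le> p' \<Longrightarrow> q' \<le> q \<Longrightarrow> block p' q' \<subseteq> block p q"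
  by (auto simp: mem_block dle_iff wR_def wL_def)

lemma block_Int_block: "block p q \<inter> block p' q' = block (max p p') (min q q')"
  by (auto simp: mem_block dle_iff wR_def wL_def)

lemma openin_block:
  assumes "p \<in> W" "q \<in> W" "p < q"
  shows "openin (fractured_topology I W) (block p q)"
proof -
  let ?V = "open_iv I W (Fin (what p)) (Fin (what q))"
  have "wR p \<in> ?V"
    using assms W_subset by (auto simp: open_iv_def wR_def what_def divided_interval_def dlt_def)
  moreover have "Fin (what p) \<in> endpoints I W" "Fin (what q) \<in> endpoints I W"
    using assms W_subset by (auto simp: endpoints_def what_def divided_interval_def)
  ultimately have "?V \<in> basis_intervals I W"
    unfolding basis_intervals_def by (force simp: what_def wL_def wR_def)
  moreover have "block p q = ?V \<inter> F"
  proof (intro set_eqI)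
    fix s :: dpt
    obtain x t where "s = (x, t)" by force
    then show "s \<in> block p q \<longleftrightarrow> s \<in> ?V \<inter> F"
      using assms fractured_interval_def[of I W]
      by (auto simp: mem_block open_iv_def mem_fractured_interval dle_iff dlt_def wR_def wL_def what_def)
  qed
  ultimately show ?thesis
    unfolding fractured_topology_def openin_subtopology divided_topology_def
    by (blast intro: topology_generated_by_Basis)
qed

lemma exists_wR_between:
  assumes c: "c \<in> endpoints I W" "\<forall>w\<in>W. c \<noteq> Fin (wL w)" and s: "s \<in> F" "elt c s"
  shows "\<exists>p\<in>W. elt c (wR p) \<and> dle (wR p) s"
proof -
  obtain x t where st: "s = (x, t)" by force
  have x: "x \<in> I" "if x \<in> W then t = -1 \<or> t = 1 else t = 0"
    using s(1) unfolding st mem_fractured_interval by auto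
  show ?thesis
  proof (cases "t = 1")
    case True
    with x s(2) show ?thesis
      unfolding st wR_def by (intro bexI[of _ x]) (auto simp: dle_def split: if_splits)
  next
    case False
    then have "t \<le> 0" using x(2) by (auto split: if_splits)
    have "\<exists>y<x. \<forall>z>y. elt c (z, 1)"
    proof (cases c)
      case (Fin e)
      obtain y u where e: "e = (y, u)" by force
      have "y < x"
      proof (rule ccontr)
        assume "\<not> y < x"
        then have "y = x" "u < t" using s(2) unfolding Fin e st by (auto simp: dlt_def)
        moreover have "(y, u) \<in> divided_interval I W" using c(1) unfolding Fin e endpoints_def by auto
        ultimately have "x \<in> W" "u = -1" using \<open>t \<le> 0\<close> by (auto simp: divided_interval_def split: if_splits)
        then show False using c(2) unfolding Fin e wL_def \<open>y = x\<close> by auto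
      qed
      then show ?thesis unfolding Fin e by (auto simp: dlt_def)
    qed (use s(2) in \<open>auto intro: exI[of _ "x - 1"]\<close>)
    then obtain y where "y < x" "\<forall>z>y. elt c (z, 1)" by blast
    moreover obtain w where "w \<in> W" "y < w" "w < x" using W_between[OF \<open>y < x\<close>] x(1) by blast
    ultimately show ?thesis unfolding st wR_def by (auto simp: dle_iff)
  qed
qed

lemma exists_wL_between:
  assumes c: "c \<in> endpoints I W" "\<forall>w\<in>W. c \<noteq> Fin (wR w)" and s: "s \<in> F" "glt s c"
  shows "\<exists>q\<in>W. glt (wL q) c \<and> dle s (wL q)"
proof -
  obtain x t where st: "s = (x, t)" by force
  have x: "x \<in> I" "if x \<in> W then t = -1 \<or> t = 1 else t = 0"
    using s(1) unfolding st mem_fractured_interval by auto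
  show ?thesis
  proof (cases "t = -1")
    case True
    with x s(2) show ?thesis
      unfolding st wL_def by (intro bexI[of _ x]) (auto simp: dle_def split: if_splits)
  next
    case False
    then have "0 \<le> t" using x(2) by (auto split: if_splits)
    have "\<exists>y>x. \<forall>z<y. glt (z, -1) c"
    proof (cases c)
      case (Fin e)
      obtain y u where e: "e = (y, u)" by force
      have "x < y"
      proof (rule ccontr)
        assume "\<not> x < y"
        then have "y = x" "t < u" using s(2) unfolding Fin e st by (auto simp: dlt_def)
        moreover have "(y, u) \<in> divided_interval I W" using c(1) unfolding Fin e endpoints_def by auto
        ultimately have "x \<in> W" "u = 1" using \<open>0 \<le> t\<close> by (auto simp: divided_interval_def split: if_splits)
        then show False using c(2) unfolding Fin e wR_def \<open>y = x\<close> by auto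
      qed
      then show ?thesis unfolding Fin e by (auto simp: dlt_def)
    qed (use s(2) in \<open>auto intro: exI[of _ "x + 1"]\<close>)
    then obtain y where "x < y" "\<forall>z<y. glt (z, -1) c" by blast
    moreover obtain w where "w \<in> W" "x < w" "w < y" using W_between[OF \<open>x < y\<close>] x(1) by blast
    ultimately show ?thesis unfolding st wL_def by (auto simp: dle_iff)
  qed
qed

lemma basis_interval_contains_block:
  assumes "V \<in> basis_intervals I W" "s \<in> F" "s \<in> V"
  shows "\<exists>p q. p \<in> W \<and> q \<in> W \<and> p < q \<and> s \<in> block p q \<and> block p q \<subseteq> V"
proof -
  obtain c e where V: "V = open_iv I W c e" "c \<in> endpoints I W" "e \<in> endpoints I W"
    "\<forall>w\<in>W. c \<noteq> Fin (wL w)" "\<forall>w\<in>W. e \<noteq> Fin (wR w)"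
    using assms(1) unfolding basis_intervals_def by blast
  have "elt c s" "glt s e" using assms(3) unfolding V(1) open_iv_def by auto
  obtain p where p: "p \<in> W" "elt c (wR p)" "dle (wR p) s"
    using exists_wR_between[OF V(2,4) assms(2) \<open>elt c s\<close>] by blast
  obtain q where q: "q \<in> W" "glt (wL q) e" "dle s (wL q)"
    using exists_wL_between[OF V(3,5) assms(2) \<open>glt s e\<close>] by blast
  have "block p q \<subseteq> V"
    using elt_dle_trans[OF p(2)] dle_glt_trans[OF _ q(2)]
    by (auto simp: V(1) open_iv_def mem_block fractured_interval_def)
  moreover have "p < q" using dle_trans[OF p(3) q(3)] by simp
  ultimately show ?thesis using assms(2) p q by (auto simp: mem_block)
qed

lemma generated_open_contains_block:
  assumes "generate_topology_on (basis_intervals I W) V" "s \<in> F" "s \<in> V"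
  shows "\<exists>p q. p \<in> W \<and> q \<in> W \<and> p < q \<and> s \<in> block p q \<and> block p q \<subseteq> V"
  using assms
proof (induction arbitrary: s rule: generate_topology_on.induct)
  case (Int V1 V2)
  obtain p1 q1 where 1: "p1 \<in> W" "q1 \<in> W" "s \<in> block p1 q1" "block p1 q1 \<subseteq> V1"
    using Int.IH(1)[of s] Int.prems by blast
  obtain p2 q2 where 2: "p2 \<in> W" "q2 \<in> W" "s \<in> block p2 q2" "block p2 q2 \<subseteq> V2"
    using Int.IH(2)[of s] Int.prems by blast
  have "max p1 p2 \<in> W" "min q1 q2 \<in> W"
    using 1 2 by (simp_all add: max_def min_def)
  moreover have s: "s \<in> block (max p1 p2) (min q1 q2)"
    using 1 2 block_Int_block by blast
  moreover have "block (max p1 p2) (min q1 q2) \<subseteq> V1 \<inter> V2"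
    using 1 2 block_Int_block by blast
  ultimately show ?case
    using mem_block_imp_less[OF s] by blast
next
  case (UN K)
  then show ?case by blast
next
  case (Basis V)
  then show ?case using basis_interval_contains_block by blast
qed simp

lemma openin_fractured_topology_iff:
  "openin (fractured_topology I W) U \<longleftrightarrow>
     U \<subseteq> F \<and> (\<forall>s\<in>U. \<exists>p q. p \<in> W \<and> q \<in> W \<and> p < q \<and> s \<in> block p q \<and> block p q \<subseteq> U)"
proof
  assume "openin (fractured_topology I W) U"
  then obtain V where V: "generate_topology_on (basis_intervals I W) V" "U = V \<inter> F"
    unfolding fractured_topology_def openin_subtopology divided_topology_def
      openin_topology_generated_by_iff by blast
  have "block p q \<subseteq> F" for p q
    by (auto simp: mem_block)
  then show "U \<subseteq> F \<and> (\<forall>s\<in>U. \<exists>p q. p \<in> W \<and> q \<in> W \<and> p < q \<and> s \<in> block p q \<and> block p q \<subseteq> U)"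
    using generated_open_contains_block[OF V(1)] V(2) by blast
next
  assume U: "U \<subseteq> F \<and> (\<forall>s\<in>U. \<exists>p q. p \<in> W \<and> q \<in> W \<and> p < q \<and> s \<in> block p q \<and> block p q \<subseteq> U)"
  show "openin (fractured_topology I W) U"
  proof (subst openin_subopen, intro ballI)
    fix s assume "s \<in> U"
    then obtain p q where "p \<in> W" "q \<in> W" "p < q" "s \<in> block p q" "block p q \<subseteq> U"
      using U by blast
    then show "\<exists>T. openin (fractured_topology I W) T \<and> s \<in> T \<and> T \<subseteq> U"
      using openin_block by blast
  qed
qed

lemma fractured_topology_base:
  "openin (fractured_topology I W) =
     arbitrary union_of (\<lambda>U. U \<in> {block p q | p q. p \<in> W \<and> q \<in> W \<and> p < q})"
proof (unfold openin_topology_base_unique, intro conjI allI impI)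
  fix V assume "V \<in> {block p q | p q. p \<in> W \<and> q \<in> W \<and> p < q}"
  then show "openin (fractured_topology I W) V" using openin_block by blast
next
  fix U s assume "openin (fractured_topology I W) U \<and> s \<in> U"
  then obtain p q where "p \<in> W" "q \<in> W" "p < q" "s \<in> block p q" "block p q \<subseteq> U"
    unfolding openin_fractured_topology_iff by blast
  then show "\<exists>V. V \<in> {block p q | p q. p \<in> W \<and> q \<in> W \<and> p < q} \<and> s \<in> V \<and> V \<subseteq> U"
    by blast
qed

definition split_point :: "real \<times> real \<Rightarrow> real" where
  "split_point c = from_nat_into W (LEAST k. from_nat_into W k \<in> {fst c<..<snd c})"

lemma split_point_between:
  assumes "fst c < snd c" "snd c \<in> I"
  shows "split_point c \<in> W" "fst c < split_point c" "split_point c < snd c"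
proof -
  obtain w where w: "w \<in> W" "fst c < w" "w < snd c"
    using W_between assms by blast
  then have "\<exists>k. from_nat_into W k \<in> {fst c<..<snd c}"
    using countable_W by (intro exI[of _ "to_nat_on W w"]) simp
  from LeastI_ex[OF this] show "fst c < split_point c" "split_point c < snd c"
    unfolding split_point_def by auto
  show "split_point c \<in> W"
    unfolding split_point_def using from_nat_into w(1) by blast
qed

lemma split_point_index:
  assumes "w \<in> W" "fst c < w" "w < snd c"
  shows "split_point c \<in> from_nat_into W ` {..to_nat_on W w}"
proof -
  have "from_nat_into W (to_nat_on W w) \<in> {fst c<..<snd c}"
    using assms countable_W by simp
  then show ?thesis
    unfolding split_point_def by (intro imageI) (simp add: Least_le)
qed

end

locale fracture_block = fracture +
  fixes a b :: real
  assumes a_in_W: "a \<in> W" and b_in_W: "b \<in> W" and a_less_b: "a < b"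
begin

abbreviation "U \<equiv> block a b"

primrec cell :: "(nat \<Rightarrow> bool) \<Rightarrow> nat \<Rightarrow> real \<times> real" where
  "cell d 0 = (a, b)"
| "cell d (Suc n) =
     (if d n then (split_point (cell d n), snd (cell d n))
      else (fst (cell d n), split_point (cell d n)))"

lemma cell_in_W: "fst (cell d n) \<in> W \<and> snd (cell d n) \<in> W \<and> fst (cell d n) < snd (cell d n)"
proof (induction n)
  case 0
  then show ?case using a_in_W b_in_W a_less_b by simp
next
  case (Suc n)
  then show ?case using split_point_between[of "cell d n"] W_subset by auto
qed

lemma split_point_cell:
  "split_point (cell d n) \<in> W \<and> fst (cell d n) < split_point (cell d n) \<and>
   split_point (cell d n) < snd (cell d n)"
  using split_point_between[of "cell d n"] cell_in_W[of d n] W_subset by auto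

lemma cell_mono: "n \<le> m \<Longrightarrow> fst (cell d n) \<le> fst (cell d m) \<and> snd (cell d m) \<le> snd (cell d n)"
proof (induction m rule: dec_induct)
  case (step m)
  then show ?case using split_point_cell[of d m] by auto
qed simp

lemma cell_fst_less_snd: "fst (cell d n) < snd (cell d m)"
  using cell_mono[of n "max n m" d] cell_mono[of m "max n m" d] cell_in_W[of d "max n m"] by auto

lemma cell_eq_if_eq_upto: "\<forall>k<n. d k = e k \<Longrightarrow> cell d n = cell e n"
  by (induction n) auto

lemma inj_split_point_cell: "inj (\<lambda>n. split_point (cell d n))"
proof -
  have "split_point (cell d n) \<noteq> split_point (cell d m)" if "n < m" for n m
  proof -
    \<comment> \<open>it is an end of cell \<open>n + 1\<close>, and all later split points lie strictly inside that cell\<close>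
    have "split_point (cell d n) \<in> {fst (cell d (Suc n)), snd (cell d (Suc n))}"
      by auto
    moreover have "fst (cell d (Suc n)) \<le> fst (cell d m)" "snd (cell d m) \<le> snd (cell d (Suc n))"
      using cell_mono[of "Suc n" m d] that by auto
    ultimately show ?thesis using split_point_cell[of d m] by auto
  qed
  then show ?thesis by (metis injI linorder_neqE_nat)
qed

lemma cell_eventually_excludes:
  assumes "w \<in> W"
  shows "\<exists>n. w \<le> fst (cell d n) \<or> snd (cell d n) \<le> w"
proof (rule ccontr)
  assume "\<nexists>n. w \<le> fst (cell d n) \<or> snd (cell d n) \<le> w"
  \<comment> \<open>then \<open>w\<close> competes at every level, so no split point has a larger index than \<open>w\<close>\<close>
  then have "split_point (cell d n) \<in> from_nat_into W ` {..to_nat_on W w}" for n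
    using split_point_index[OF assms, of "cell d n"] by (simp add: not_le)
  then have "range (\<lambda>n. split_point (cell d n)) \<subseteq> from_nat_into W ` {..to_nat_on W w}"
    by blast
  then have "finite (range (\<lambda>n. split_point (cell d n)))"
    by (rule finite_subset) simp
  then show False
    using range_inj_infinite[OF inj_split_point_cell] by blast
qed

definition cell_block :: "(nat \<Rightarrow> bool) \<Rightarrow> nat \<Rightarrow> dpt set" where
  "cell_block d n = block (fst (cell d n)) (snd (cell d n))"

lemma cell_block_0 [simp]: "cell_block d 0 = U"
  by (simp add: cell_block_def)

lemma cell_block_subset: "cell_block d n \<subseteq> U"
  using cell_mono[of 0 n d] unfolding cell_block_def by (intro block_subset_block) auto

lemma openin_cell_block: "openin (fractured_topology I W) (cell_block d n)"
  unfolding cell_block_def using cell_in_W by (intro openin_block) auto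

lemma mem_cell_block_Suc:
  "t \<in> cell_block d (Suc n) \<longleftrightarrow>
     t \<in> cell_block d n \<and> (dle (wR (split_point (cell d n))) t \<longleftrightarrow> d n)"
proof -
  define m where "m = split_point (cell d n)"
  have m: "m \<in> W" "fst (cell d n) < m" "m < snd (cell d n)"
    using split_point_cell[of d n] unfolding m_def by auto
  show ?thesis
  proof (cases "d n")
    case True
    then show ?thesis
      using m dle_trans[of "wR (fst (cell d n))" "wR m" t]
      by (auto simp: cell_block_def mem_block m_def[symmetric])
  next
    case False
    have "t \<in> F \<Longrightarrow> dle t (wL m) \<longleftrightarrow> \<not> dle (wR m) t"
      using dle_wL_iff_not_wR_dle m(1) by blast
    then show ?thesis
      using False m dle_trans[of t "wL m" "wL (snd (cell d n))"]
      by (auto simp: cell_block_def mem_block m_def[symmetric])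
  qed
qed

text \<open>\<open>cell_of s\<close> is \<open>cell (address s)\<close>; it is defined directly because the address of
  \<open>s\<close> is read off from these cells.\<close>

primrec cell_of :: "dpt \<Rightarrow> nat \<Rightarrow> real \<times> real" where
  "cell_of s 0 = (a, b)"
| "cell_of s (Suc n) =
     (if dle (wR (split_point (cell_of s n))) s then (split_point (cell_of s n), snd (cell_of s n))
      else (fst (cell_of s n), split_point (cell_of s n)))"

definition address :: "dpt \<Rightarrow> nat \<Rightarrow> bool" where
  "address s n \<longleftrightarrow> dle (wR (split_point (cell_of s n))) s"

lemma cell_address: "cell (address s) n = cell_of s n"
  by (induction n) (simp_all add: address_def)

lemma address_eq: "address s n \<longleftrightarrow> dle (wR (split_point (cell (address s) n))) s"
  by (simp add: cell_address address_def)

lemma mem_cell_block_iff: "t \<in> U \<Longrightarrow> t \<in> cell_block d n \<longleftrightarrow> (\<forall>k<n. address t k = d k)"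
proof (induction n)
  case (Suc n)
  show ?case
  proof (cases "\<forall>k<n. address t k = d k")
    case True
    then have "cell (address t) n = cell d n"
      by (rule cell_eq_if_eq_upto)
    then have "address t n \<longleftrightarrow> dle (wR (split_point (cell d n))) t"
      using address_eq by simp
    then show ?thesis
      using True Suc mem_cell_block_Suc by (auto simp: less_Suc_eq)
  next
    case False
    then show ?thesis
      using Suc mem_cell_block_Suc by (auto simp: less_Suc_eq)
  qed
qed simp

lemma mem_own_cell_block: "t \<in> U \<Longrightarrow> t \<in> cell_block (address t) n"
  by (simp add: mem_cell_block_iff)

lemma cell_block_subset_block:
  assumes "t \<in> U" "c \<in> W" "e \<in> W" "t \<in> block c e"
  shows "\<exists>n. cell_block (address t) n \<subseteq> block c e"
proof -
  let ?C = "cell (address t)"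
  have t: "t \<in> block (fst (?C n)) (snd (?C n))" for n
    using mem_own_cell_block[OF assms(1)] unfolding cell_block_def .
  have "c < snd (?C n)" "fst (?C n) < e" for n
    using mem_block_wR_dle_imp_less[OF t] mem_block_dle_wL_imp_less[OF t] assms(4)
    by (simp_all add: mem_block)
  moreover obtain n1 where "c \<le> fst (?C n1) \<or> snd (?C n1) \<le> c"
    using cell_eventually_excludes[OF assms(2)] by blast
  moreover obtain n2 where "e \<le> fst (?C n2) \<or> snd (?C n2) \<le> e"
    using cell_eventually_excludes[OF assms(3)] by blast
  ultimately have "c \<le> fst (?C n1)" "snd (?C n2) \<le> e"
    by (meson not_le)+
  then have "c \<le> fst (?C (max n1 n2))" "snd (?C (max n1 n2)) \<le> e"
    using cell_mono[of n1 "max n1 n2" "address t"] cell_mono[of n2 "max n1 n2" "address t"]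
    by auto
  then show ?thesis
    unfolding cell_block_def using block_subset_block by blast
qed

lemma address_neq_if_dlt:
  assumes "s \<in> U" "t \<in> U" "dlt s t"
  shows "address s \<noteq> address t"
proof
  assume eq: "address s = address t"
  obtain w where w: "w \<in> W" "dle s (wL w)" "dle (wR w) t"
    using W_between_points assms unfolding mem_block by blast
  let ?C = "cell (address t)"
  have "t \<in> block (fst (?C n)) (snd (?C n))" "s \<in> block (fst (?C n)) (snd (?C n))" for n
    using mem_own_cell_block[OF assms(1)] mem_own_cell_block[OF assms(2)] eq
    unfolding cell_block_def by auto
  then have "w < snd (?C n)" "fst (?C n) < w" for n
    using w by (blast intro: mem_block_wR_dle_imp_less mem_block_dle_wL_imp_less)+
  moreover obtain n where "w \<le> fst (?C n) \<or> snd (?C n) \<le> w"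
    using cell_eventually_excludes[OF w(1)] by blast
  ultimately show False
    by (meson not_le)
qed

lemma inj_on_address: "inj_on address U"
proof (rule inj_onI)
  fix s t assume "s \<in> U" "t \<in> U" "address s = address t"
  moreover have "dlt s t \<or> dlt t s \<or> s = t"
    unfolding dlt_def by (cases s; cases t) auto
  ultimately show "s = t"
    using address_neq_if_dlt by metis
qed

lemma exists_address_eq: "\<exists>s\<in>U. address s = d"
proof -
  define \<alpha> where "\<alpha> = (SUP n. fst (cell d n))"
  have "bdd_above (range (\<lambda>n. fst (cell d n)))"
    using cell_fst_less_snd[of d _ 0] by (intro bdd_aboveI[of _ b]) (auto intro: less_imp_le)
  then have fst_le: "fst (cell d n) \<le> \<alpha>" for n
    unfolding \<alpha>_def by (rule cSUP_upper[rotated]) simp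
  have le_snd: "\<alpha> \<le> snd (cell d n)" for n
    unfolding \<alpha>_def by (rule cSUP_least) (auto intro: less_imp_le cell_fst_less_snd)
  have "\<alpha> \<in> I"
    using interval a_in_W b_in_W W_subset fst_le[of 0] le_snd[of 0] unfolding is_interval_1 by auto
  define s where "s = (if \<exists>n. fst (cell d n) = \<alpha> then (\<alpha>, 1::int)
      else if \<alpha> \<in> W then (\<alpha>, -1) else (\<alpha>, 0))"
  have "s \<in> cell_block d n" for n
  proof (cases "\<exists>k. fst (cell d k) = \<alpha>")
    case True
    then obtain k where k: "fst (cell d k) = \<alpha>" by blast
    then have "\<alpha> \<in> W" "\<alpha> < snd (cell d n)"
      using cell_in_W[of d k] cell_fst_less_snd[of d k n] by auto
    then show ?thesis
      using True fst_le[of n] \<open>\<alpha> \<in> I\<close>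
      by (auto simp: s_def cell_block_def mem_block wR_def wL_def dle_iff mem_fractured_interval)
  next
    case False
    then have "fst (cell d n) < \<alpha>" using fst_le[of n] by (metis order_le_imp_less_or_eq)
    moreover have "\<alpha> \<in> W \<or> \<alpha> < snd (cell d n)"
      using cell_in_W[of d n] le_snd[of n] by fastforce
    ultimately show ?thesis
      using False le_snd[of n] \<open>\<alpha> \<in> I\<close>
      by (auto simp: s_def cell_block_def mem_block wR_def wL_def dle_iff mem_fractured_interval)
  qed
  then show ?thesis
    using mem_cell_block_iff[of s d] cell_block_0[of d] by (blast intro: lessI)
qed

definition cantor_coord :: "dpt \<Rightarrow> real" where
  "cantor_coord s = ternary (address s)"

lemma topspace_block: "topspace (subtopology (fractured_topology I W) U) = U"
  using openin_subset[OF openin_block[OF a_in_W b_in_W a_less_b]]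
  by (rule topspace_subtopology_subset)

lemma cantor_coord_image: "cantor_coord ` U = cantor_set"
proof -
  have "address ` U = UNIV"
    using exists_address_eq by (metis UNIV_eq_I image_iff)
  then show ?thesis
    using range_ternary by (simp add: cantor_coord_def image_image[symmetric])
qed

lemma inj_on_cantor_coord: "inj_on cantor_coord U"
  unfolding cantor_coord_def using inj_on_address inj_ternary
  by (simp add: inj_on_def)

lemma continuous_map_cantor_coord:
  "continuous_map (subtopology (fractured_topology I W) U) euclideanreal cantor_coord"
  unfolding Met_TC.continuous_map_to_metric[simplified] topspace_block
proof (intro ballI allI impI)
  fix s \<epsilon> assume s: "s \<in> U" and "(0::real) < \<epsilon>"
  then obtain n where n: "(1/3::real) ^ n < \<epsilon>"
    using real_arch_pow_inv[of \<epsilon> "1/3"] by auto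
  let ?V = "cell_block (address s) n"
  have "openin (subtopology (fractured_topology I W) U) (?V \<inter> U)"
    by (rule openin_subtopology_Int[OF openin_cell_block])
  then have "openin (subtopology (fractured_topology I W) U) ?V"
    using cell_block_subset by (simp add: Int_absorb2)
  moreover have "dist (cantor_coord s) (cantor_coord t) < \<epsilon>" if t: "t \<in> ?V" for t
  proof -
    have "\<forall>k<n. address t k = address s k"
      using mem_cell_block_iff t cell_block_subset by blast
    then show ?thesis
      using ternary_dist_le_if_eq_upto[of n "address t" "address s"] n
      by (simp add: cantor_coord_def dist_real_def abs_minus_commute power_divide)
  qed
  ultimately show "\<exists>V. openin (subtopology (fractured_topology I W) U) V \<and> s \<in> V \<and>
      (\<forall>t\<in>V. dist (cantor_coord s) (cantor_coord t) < \<epsilon>)"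
    using mem_own_cell_block[OF s] by blast
qed

lemma open_map_cantor_coord:
  "open_map (subtopology (fractured_topology I W) U) (top_of_set cantor_set) cantor_coord"
proof (unfold open_map_def, intro allI impI)
  fix V assume "openin (subtopology (fractured_topology I W) U) V"
  then obtain V' where V': "openin (fractured_topology I W) V'" "V = V' \<inter> U"
    unfolding openin_subtopology by blast
  show "openin (top_of_set cantor_set) (cantor_coord ` V)"
    unfolding openin_euclidean_subtopology_iff
  proof (intro conjI ballI)
    show "cantor_coord ` V \<subseteq> cantor_set"
      using cantor_coord_image V'(2) by auto
  next
    fix x assume "x \<in> cantor_coord ` V"
    then obtain s where s: "s \<in> V" "x = cantor_coord s" by blast
    then obtain p q where "p \<in> W" "q \<in> W" "s \<in> block p q" "block p q \<subseteq> V'"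
      using V' unfolding openin_fractured_topology_iff by blast
    then obtain n where n: "cell_block (address s) n \<subseteq> V'"
      using cell_block_subset_block s(1) V'(2) by blast
    show "\<exists>e>0. \<forall>y\<in>cantor_set. dist y x < e \<longrightarrow> y \<in> cantor_coord ` V"
    proof (intro exI[of _ "1/3^n"] conjI ballI impI)
      fix y assume y: "y \<in> cantor_set" "dist y x < 1/3^n"
      then obtain t where t: "t \<in> U" "y = cantor_coord t"
        using cantor_coord_image by blast
      then have "\<forall>k<n. address t k = address s k"
        using y(2) s(2) eq_upto_if_ternary_dist_less by (simp add: cantor_coord_def dist_real_def)
      then have "t \<in> V"
        using mem_cell_block_iff[OF t(1)] n t(1) V'(2) by blast
      then show "y \<in> cantor_coord ` V"
        using t(2) by blast
    qed simp
  qed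
qed

lemma block_homeomorphic_cantor_set:
  "subtopology (fractured_topology I W) U homeomorphic_space top_of_set cantor_set"
proof (rule homeomorphic_map_imp_homeomorphic_space, rule bijective_open_imp_homeomorphic_map)
  show "continuous_map (subtopology (fractured_topology I W) U) (top_of_set cantor_set) cantor_coord"
    using continuous_map_cantor_coord cantor_coord_image topspace_block
    by (simp add: continuous_map_in_subtopology image_subset_iff_funcset[symmetric])
qed (use open_map_cantor_coord cantor_coord_image inj_on_cantor_coord topspace_block in auto)

end

theorem proposition3p8:
  fixes I W :: "real set"
  assumes "is_interval I" and "open I" and "I \<noteq> {}"
    and "countable W" and "W \<subseteq> I" and "I \<subseteq> closure W"
  defines "\<B> \<equiv> {closed_iv (wR a) (wL b) \<inter> fractured_interval I W | a b. a \<in> W \<and> b \<in> W \<and> a < b}"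
  shows "openin (fractured_topology I W) = arbitrary union_of (\<lambda>U. U \<in> \<B>) \<and>
         (\<forall>U\<in>\<B>. subtopology (fractured_topology I W) U homeomorphic_space
                 subtopology euclideanreal cantor_set)"
proof -
  interpret fracture I W
    using assms by unfold_locales
  have \<B>: "\<B> = {block p q | p q. p \<in> W \<and> q \<in> W \<and> p < q}"
    unfolding \<B>_def block_def by blast
  have "subtopology (fractured_topology I W) X homeomorphic_space top_of_set cantor_set"
    if "X \<in> \<B>" for X
  proof -
    obtain p q where "p \<in> W" "q \<in> W" "p < q" "X = block p q"
      using \<open>X \<in> \<B>\<close> unfolding \<B> by blast
    then interpret fracture_block I W p q
      by unfold_locales
    show ?thesis
      using block_homeomorphic_cantor_set \<open>X = block p q\<close> by simp
  qed
  then show ?thesis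
    using fractured_topology_base \<B> by simp
qed

end
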